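(* Fix $\beta\in(0,1)$, $C_{\log}>0$, positive learning rates $\gamma^t_i,\gamma^{t+1}_i$ ($i\in[K]$), nonnegative loss-estimate vectors $\hat\ell^1,\dots,\hat\ell^t\in\mathbb{R}^K$, and a partition $[K]=U\cup V$ with $U\ne\emptyset$. With $p^t,p^{t+1},q^t,q^{t+1},\bar p^{t+1}$ as defined in the context, $$D^{t,t+1}(p^t,p^{t+1})-D^{t,t+1}_U(q^t,q^{t+1})\le D^{t,t+1}_V(p^t,\bar p^{t+1})+\Big(D^{t,t+1}_U(p^t,\bar p^{t+1})-D^{t,t+1}_U(q^t,q^{t+1})\Big)+D^{t+1}(\bar p^{t+1},p^{t+1}).$$
   Context: Regularizer: $\phi^s(x)=-C_{\log}\sum_{i\in[K]}\log x_i-\frac{1}{1-\beta}\sum_{i\in[K]}\gamma^s_ix_i^\beta$ for $s\in\{t,t+1\}$; for $\mathcal{I}\subseteq[K]$, $\phi^s_{\mathcal{I}}(x)=-C_{\log}\sum_{i\in\mathcal{I}}\log x_i-\frac{1}{1-\beta}\sum_{i\in\mathcal{I}}\gamma^s_ix_i^\beta$. Skewed Bregman divergences: $D^{s,r}(x,y)=\phi^s(x)-\phi^r(y)-\langle\nabla\phi^r(y),x-y\rangle$, $D^{s,r}_{\mathcal{I}}(x,y)=\phi^s_{\mathcal{I}}(x)-\phi^r_{\mathcal{I}}(y)-\langle\nabla\phi^r_{\mathcal{I}}(y),x-y\rangle$ (which only involves coordinates in $\mathcal{I}$), and $D^s=D^{s,s}$. $\Omega_K$ is the simplex, $\Omega_U=\{p\in\Omega_K:\sum_{i\in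 U}p_i=1\}$. Define $p^s=\arg\min_{p\in\Omega_K}\langle p,\sum_{\tau<s}\hat\ell^\tau\rangle+\phi^s(p)$ and $q^s=\arg\min_{p\in\Omega_U}\langle p,\sum_{\tau<s}\hat\ell^\tau\rangle+\phi^s(p)$ for $s\in\{t,t+1\}$. Define $\bar p^{t+1}=\bar p^{t+1}_U+\bar p^{t+1}_V$ where $\bar p^{t+1}_U=\arg\min\{\langle x,\sum_{\tau\le t}\hat\ell^\tau\rangle+\phi^{t+1}_U(x): x\in\mathbb{R}^K_{\ge0},\ \sum_{i\in V}x_i=0,\ \sum_{i\in U}x_i=\sum_{i\in U}p^t_i\}$ and $\bar p^{t+1}_V=\arg\min\{\langle x,\sum_{\tau\le t}\hat\ell^\tau\rangle+\phi^{t+1}_V(x): x\in\mathbb{R}^K_{\ge0},\ \sum_{i\in U}x_i=0,\ \sum_{i\in V}x_i=\sum_{i\in V}p^t_i\}$. *)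

theory Defs
  imports "HOL-Analysis.Analysis"
begin

text \<open>Arms are indexed by a finite type 'k (so [K] = UNIV, K = CARD('k)).
  Restricted regularizer phi^s_I with learning-rate vector gam = gamma^s.\<close>
definition phiI :: "real \<Rightarrow> real \<Rightarrow> real^'k \<Rightarrow> 'k set \<Rightarrow> real^'k \<Rightarrow> real" where
  "phiI C \<beta> gam I x =
     - C * (\<Sum>i\<in>I. ln (x$i)) - 1 / (1 - \<beta>) * (\<Sum>i\<in>I. gam$i * (x$i) powr \<beta>)"

definition gradphi :: "real \<Rightarrow> real \<Rightarrow> real^'k \<Rightarrow> real^'k \<Rightarrow> 'k \<Rightarrow> real" where
  "gradphi C \<beta> gam y i = - C / (y$i) - gam$i * \<beta> / (1 - \<beta>) * (y$i) powr (\<beta> - 1)"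

text \<open>Skewed Bregman divergence D^{s,r}_I(x,y), gs = gamma^s, gr = gamma^r.\<close>
definition DI :: "real \<Rightarrow> real \<Rightarrow> real^'k \<Rightarrow> real^'k \<Rightarrow> 'k set \<Rightarrow> real^'k \<Rightarrow> real^'k \<Rightarrow> real" where
  "DI C \<beta> gs gr I x y =
     phiI C \<beta> gs I x - phiI C \<beta> gr I y - (\<Sum>i\<in>I. gradphi C \<beta> gr y i * (x$i - y$i))"

text \<open>Nonnegative vectors supported on I with total mass c, strictly positive on I
  (the log barrier forces minimizers into this set).\<close>
definition restr_simplex :: "'k set \<Rightarrow> real \<Rightarrow> (real^'k) set" where
  "restr_simplex I c = {x. (\<forall>i. 0 \<le> x$i) \<and> (\<forall>i\<in>I. 0 < x$i) \<and> (\<forall>i\<in>-I. x$i = 0)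
                           \<and> (\<Sum>i\<in>I. x$i) = c}"

definition argmin_on :: "'a set \<Rightarrow> ('a \<Rightarrow> real) \<Rightarrow> 'a" where
  "argmin_on S f = (SOME x. x \<in> S \<and> (\<forall>y\<in>S. f x \<le> f y))"

definition ftrl :: "real \<Rightarrow> real \<Rightarrow> real^'k \<Rightarrow> 'k set \<Rightarrow> real \<Rightarrow> real^'k \<Rightarrow> real^'k" where
  "ftrl C \<beta> gam I c L =
     argmin_on (restr_simplex I c) (\<lambda>x. (\<Sum>i\<in>UNIV. x$i * L$i) + phiI C \<beta> gam I x)"

end

theory Submission imports Defs begin

(* The three-point identity for Bregman divergences, taken at the intermediate point pbar,
   splits D^{t,t+1}(p^t, p^{t+1}) into D^{t,t+1}(p^t, pbar) + D^{t+1}(pbar, p^{t+1}) plus the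
   cross term <grad phi(pbar) - grad phi(p^{t+1}), p^t - pbar>.  The log barrier keeps every
   minimizer in the relative interior of its face, so the first-order conditions hold there:
   on each block U, V, the points pbar and p^{t+1} minimize the same linear-plus-phi objective,
   hence grad phi(pbar) - grad phi(p^{t+1}) is constant on the block, while p^t - pbar has zero
   mass on it.  The cross term vanishes and the claim holds with equality. *)

definition ftrl_obj :: "real \<Rightarrow> real \<Rightarrow> real^'k \<Rightarrow> 'k set \<Rightarrow> real^'k \<Rightarrow> real^'k \<Rightarrow> real" where
  "ftrl_obj C \<beta> g I L x = (\<Sum>i\<in>UNIV. x$i * L$i) + phiI C \<beta> g I x"

definition ftrl_coord_obj :: "real \<Rightarrow> real \<Rightarrow> real^'k \<Rightarrow> real^'k \<Rightarrow> 'k \<Rightarrow> real \<Rightarrow> real" where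
  "ftrl_coord_obj C \<beta> g L k s = s * L$k - C * ln s - 1 / (1 - \<beta>) * (g$k * s powr \<beta>)"

text \<open>First-order condition for minimizing over restr_simplex I c; the common value is the
  Lagrange multiplier of the mass constraint.\<close>
definition kkt_point :: "real \<Rightarrow> real \<Rightarrow> real^'k \<Rightarrow> 'k set \<Rightarrow> real^'k \<Rightarrow> real^'k \<Rightarrow> bool" where
  "kkt_point C \<beta> g I L x \<longleftrightarrow>
     (\<forall>i\<in>I. \<forall>j\<in>I. L$i + gradphi C \<beta> g x i = L$j + gradphi C \<beta> g x j)"

definition shift_mass :: "real^'k \<Rightarrow> 'k \<Rightarrow> 'k \<Rightarrow> real \<Rightarrow> real^'k" where
  "shift_mass x i j s = (\<chi> k. if k = i then x$i + s else if k = j then x$j - s else x$k)"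

lemma ftrl_eq_argmin_obj:
  "ftrl C \<beta> g I c L = argmin_on (restr_simplex I c) (ftrl_obj C \<beta> g I L)"
  unfolding ftrl_def ftrl_obj_def[abs_def] by simp

lemma argmin_on_minimizes:
  assumes "\<exists>x\<in>S. \<forall>y\<in>S. f x \<le> f y"
  shows "argmin_on S f \<in> S \<and> (\<forall>y\<in>S. f (argmin_on S f) \<le> f y)"
  unfolding argmin_on_def by (rule someI_ex) (use assms in blast)

lemma ftrl_obj_eq_sum_coord_obj:
  assumes "\<forall>i\<in>-I. x$i = 0"
  shows "ftrl_obj C \<beta> g I L x = (\<Sum>k\<in>I. ftrl_coord_obj C \<beta> g L k (x$k))"
proof -
  have "(\<Sum>i\<in>UNIV. x$i * L$i) = (\<Sum>i\<in>I. x$i * L$i)"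
    by (rule sum.mono_neutral_right) (use assms in auto)
  then show ?thesis
    unfolding ftrl_obj_def phiI_def ftrl_coord_obj_def
    by (simp add: sum_subtractf sum_distrib_left sum_divide_distrib sum_negf)
qed

lemma ftrl_coord_obj_has_derivative:
  assumes "0 < x$k" "\<beta> < 1"
  shows "(ftrl_coord_obj C \<beta> g L k has_real_derivative L$k + gradphi C \<beta> g x k) (at (x$k))"
proof -
  have "(ftrl_coord_obj C \<beta> g L k has_real_derivative
          L$k - C * (1 / x$k) - 1 / (1 - \<beta>) * (g$k * (\<beta> * x$k powr (\<beta> - 1)))) (at (x$k))"
    unfolding ftrl_coord_obj_def[abs_def] using assms
    by (auto intro!: derivative_eq_intros has_real_derivative_powr)
  then show ?thesis
    unfolding gradphi_def by (simp add: algebra_simps)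
qed

lemma ftrl_coord_obj_lower_bound:
  assumes "0 < \<beta>" "\<beta> < 1" "0 \<le> g$k" "0 \<le> L$k" "0 < s" "s \<le> c"
  shows "- C * ln c - g$k * c powr \<beta> / (1 - \<beta>) + C * (ln c - ln s) \<le> ftrl_coord_obj C \<beta> g L k s"
proof -
  have "g$k * s powr \<beta> \<le> g$k * c powr \<beta>"
    using assms by (intro mult_left_mono powr_mono2) auto
  then have "g$k * s powr \<beta> / (1 - \<beta>) \<le> g$k * c powr \<beta> / (1 - \<beta>)"
    using assms(2) by (simp add: divide_right_mono)
  moreover have "0 \<le> s * L$k" using assms by simp
  ultimately show ?thesis unfolding ftrl_coord_obj_def by (simp add: algebra_simps)
qed

lemma ftrl_obj_ge_log_barrier:
  assumes "0 < C" "0 < \<beta>" "\<beta> < 1" "\<forall>i. 0 \<le> g$i" "\<forall>i. 0 \<le> L$i"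
    and y: "y \<in> restr_simplex I c" and j: "j \<in> I"
  shows "(\<Sum>k\<in>I. - C * ln c - g$k * c powr \<beta> / (1 - \<beta>)) + C * (ln c - ln (y$j))
           \<le> ftrl_obj C \<beta> g I L y"
proof -
  have y_pos: "\<forall>k\<in>I. 0 < y$k" and y_nonneg: "\<forall>k. 0 \<le> y$k" and y_sum: "(\<Sum>k\<in>I. y$k) = c"
    using y unfolding restr_simplex_def by auto
  have y_le: "y$k \<le> c" if "k \<in> I" for k
    using member_le_sum[of k I "\<lambda>k. y$k"] that y_nonneg y_sum by simp
  have c: "0 < c" using j y_pos y_le[OF j] by fastforce
  have "C * (ln c - ln (y$j)) \<le> (\<Sum>k\<in>I. C * (ln c - ln (y$k)))"
    using j y_pos y_le c assms(1) by (intro member_le_sum) (auto intro!: mult_nonneg_nonneg)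
  also have "(\<Sum>k\<in>I. - C * ln c - g$k * c powr \<beta> / (1 - \<beta>)) + \<dots>
      \<le> (\<Sum>k\<in>I. ftrl_coord_obj C \<beta> g L k (y$k))"
    unfolding sum.distrib[symmetric]
    using assms y_pos y_le by (intro sum_mono ftrl_coord_obj_lower_bound) auto
  also have "\<dots> = ftrl_obj C \<beta> g I L y"
    using y unfolding restr_simplex_def by (simp add: ftrl_obj_eq_sum_coord_obj)
  finally show ?thesis by simp
qed

lemma ftrl_obj_gt_of_coord_small:
  assumes "0 < C" "0 < \<beta>" "\<beta> < 1" "\<forall>i. 0 \<le> g$i" "\<forall>i. 0 \<le> L$i"
    and y: "y \<in> restr_simplex I c" and j: "j \<in> I"
    and small: "y$j < c * exp (- (B - (\<Sum>k\<in>I. - C * ln c - g$k * c powr \<beta> / (1 - \<beta>))) / C)"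
  shows "B < ftrl_obj C \<beta> g I L y"
proof -
  define m where "m = (\<Sum>k\<in>I. - C * ln c - g$k * c powr \<beta> / (1 - \<beta>))"
  have y_j: "0 < y$j" using y j unfolding restr_simplex_def by auto
  then have "0 < c * exp (- (B - m) / C)" using small unfolding m_def by linarith
  then have c: "0 < c" by (simp add: zero_less_mult_iff)
  have "B - m = C * (ln c - ln (c * exp (- (B - m) / C)))"
    using c assms(1) by (simp add: ln_mult)
  also have "\<dots> < C * (ln c - ln (y$j))"
    using y_j small c assms(1) unfolding m_def by simp
  finally have "B < m + C * (ln c - ln (y$j))" by simp
  also have "\<dots> \<le> ftrl_obj C \<beta> g I L y"
    unfolding m_def by (rule ftrl_obj_ge_log_barrier[OF assms(1-5) y j])
  finally show ?thesis .
qed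

lemma compact_restr_simplex_ge:
  assumes "0 < e"
  shows "compact {x \<in> restr_simplex I c. \<forall>i\<in>I. e \<le> x$i}" (is "compact ?K")
proof -
  have K: "?K = {x. (\<forall>i. 0 \<le> x$i) \<and> (\<forall>i. i \<in> I \<longrightarrow> e \<le> x$i) \<and> (\<forall>i. i \<notin> I \<longrightarrow> x$i = 0)
                    \<and> (\<Sum>i\<in>I. x$i) = c}"
    unfolding restr_simplex_def by (auto intro: less_le_trans[OF assms])
  have "x$i \<le> \<bar>c\<bar>" if x: "x \<in> ?K" for x i
  proof (cases "i \<in> I")
    case True
    then have "x$i \<le> (\<Sum>i\<in>I. x$i)"
      using x unfolding K by (intro member_le_sum) auto
    then show ?thesis using x unfolding K by auto
  qed (use x in \<open>auto simp: K\<close>)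
  then have "?K \<subseteq> cbox 0 (\<chi> i. \<bar>c\<bar>)"
    unfolding K by (auto simp: mem_box_cart)
  then have "bounded ?K" by (rule bounded_subset[OF bounded_cbox])
  moreover have "closed ?K"
    unfolding K
    by (intro closed_Collect_conj closed_Collect_all closed_Collect_imp closed_Collect_le
          closed_Collect_eq continuous_intros closed_Collect_const) simp_all
  ultimately show ?thesis by (simp add: compact_eq_bounded_closed)
qed

lemma ftrl_obj_attains_min:
  fixes g L :: "real^'k"
  assumes reg: "0 < C" "0 < \<beta>" "\<beta> < 1" "\<forall>i. 0 \<le> g$i" "\<forall>i. 0 \<le> L$i"
    and I: "I \<noteq> {}" and c: "0 < c"
  shows "\<exists>x\<in>restr_simplex I c. \<forall>y\<in>restr_simplex I c. ftrl_obj C \<beta> g I L x \<le> ftrl_obj C \<beta> g I L y"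
proof -
  define f where "f = ftrl_obj C \<beta> g I L"
  define m where "m = (\<Sum>k\<in>I. - C * ln c - g$k * c powr \<beta> / (1 - \<beta>))"
  define x0 :: "real^'k" where "x0 = (\<chi> i. if i \<in> I then c / card I else 0)"
  define e where "e = min (c / card I) (c * exp (- (f x0 - m) / C))"
  define K where "K = {x \<in> restr_simplex I c. \<forall>i\<in>I. e \<le> x$i}"
  have n: "0 < card I" using I by (simp add: card_gt_0_iff)
  have e: "0 < e" using n c unfolding e_def by simp
  have x0_K: "x0 \<in> K"
    using n c unfolding K_def x0_def e_def restr_simplex_def by auto
  have "continuous_on K f"
    unfolding f_def ftrl_obj_def[abs_def] phiI_def
    by (intro continuous_intros) (auto simp: K_def restr_simplex_def)
  moreover have "compact K"
    unfolding K_def using e by (rule compact_restr_simplex_ge)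
  ultimately obtain xm where xm: "xm \<in> K" "\<forall>y\<in>K. f xm \<le> f y"
    using continuous_attains_inf[of K f] x0_K by blast
  txt \<open>Off K the log barrier pushes the objective above its value at x0.\<close>
  have off_K: "f xm < f y" if y: "y \<in> restr_simplex I c" "y \<notin> K" for y
  proof -
    obtain j where j: "j \<in> I" "y$j < e"
      using y unfolding K_def by (auto simp: not_le)
    have "y$j < c * exp (- (f x0 - m) / C)" using j(2) unfolding e_def by simp
    then have "f x0 < f y"
      unfolding m_def f_def by (rule ftrl_obj_gt_of_coord_small[OF reg y(1) j(1)])
    then show ?thesis using xm x0_K by fastforce
  qed
  have "f xm \<le> f y" if y: "y \<in> restr_simplex I c" for y
  proof (cases "y \<in> K")
    case True
    then show ?thesis using xm(2) by blast
  next
    case False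
    then show ?thesis using off_K[OF y] by simp
  qed
  moreover have "xm \<in> restr_simplex I c" using xm(1) unfolding K_def by simp
  ultimately show ?thesis unfolding f_def by blast
qed

lemma ftrl_minimizes:
  assumes "0 < C" "0 < \<beta>" "\<beta> < 1" "\<forall>i. 0 \<le> g$i" "\<forall>i. 0 \<le> L$i"
    and "0 \<le> c" "c = 0 \<longleftrightarrow> I = {}"
  shows "ftrl C \<beta> g I c L \<in> restr_simplex I c \<and>
         (\<forall>y\<in>restr_simplex I c. ftrl_obj C \<beta> g I L (ftrl C \<beta> g I c L) \<le> ftrl_obj C \<beta> g I L y)"
  unfolding ftrl_eq_argmin_obj
proof (rule argmin_on_minimizes)
  show "\<exists>x\<in>restr_simplex I c. \<forall>y\<in>restr_simplex I c. ftrl_obj C \<beta> g I L x \<le> ftrl_obj C \<beta> g I L y"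
  proof (cases "I = {}")
    case True
    then have "restr_simplex I c = {0}"
      using assms(7) unfolding restr_simplex_def by (auto simp: vec_eq_iff)
    then show ?thesis by simp
  next
    case False
    then show ?thesis using assms by (intro ftrl_obj_attains_min) auto
  qed
qed

lemma shift_mass_in_restr_simplex:
  assumes x: "x \<in> restr_simplex I c" and ij: "i \<in> I" "j \<in> I" "i \<noteq> j"
    and s: "\<bar>s\<bar> < min (x$i) (x$j)"
  shows "shift_mass x i j s \<in> restr_simplex I c"
proof -
  have "(\<Sum>k\<in>I. shift_mass x i j s $ k)
      = (\<Sum>k\<in>I. x$k + (if k = i then s else 0) - (if k = j then s else 0))"
    by (rule sum.cong) (use ij in \<open>auto simp: shift_mass_def\<close>)
  also have "\<dots> = c"
    using ij x unfolding restr_simplex_def by (simp add: sum.distrib sum_subtractf)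
  finally show ?thesis
    using x ij s unfolding restr_simplex_def shift_mass_def by auto
qed

lemma ftrl_obj_shift_mass:
  assumes x_out: "\<forall>k\<in>-I. x$k = 0" and ij: "i \<in> I" "j \<in> I" "i \<noteq> j"
  shows "ftrl_obj C \<beta> g I L (shift_mass x i j s) - ftrl_obj C \<beta> g I L x
    = (ftrl_coord_obj C \<beta> g L i (x$i + s) - ftrl_coord_obj C \<beta> g L i (x$i))
      + (ftrl_coord_obj C \<beta> g L j (x$j - s) - ftrl_coord_obj C \<beta> g L j (x$j))"
proof -
  have "\<forall>k\<in>-I. shift_mass x i j s $ k = 0"
    using x_out ij unfolding shift_mass_def by auto
  then have "ftrl_obj C \<beta> g I L (shift_mass x i j s) - ftrl_obj C \<beta> g I L x
      = (\<Sum>k\<in>I. ftrl_coord_obj C \<beta> g L k (shift_mass x i j s $ k) - ftrl_coord_obj C \<beta> g L k (x$k))"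
    using x_out by (simp add: ftrl_obj_eq_sum_coord_obj sum_subtractf)
  also have "\<dots> = (\<Sum>k\<in>I.
        (if k = i then ftrl_coord_obj C \<beta> g L i (x$i + s) - ftrl_coord_obj C \<beta> g L i (x$i) else 0)
      + (if k = j then ftrl_coord_obj C \<beta> g L j (x$j - s) - ftrl_coord_obj C \<beta> g L j (x$j) else 0))"
    by (rule sum.cong) (use ij in \<open>auto simp: shift_mass_def\<close>)
  also have "\<dots> = (ftrl_coord_obj C \<beta> g L i (x$i + s) - ftrl_coord_obj C \<beta> g L i (x$i))
      + (ftrl_coord_obj C \<beta> g L j (x$j - s) - ftrl_coord_obj C \<beta> g L j (x$j))"
    using ij by (simp add: sum.distrib)
  finally show ?thesis .
qed

lemma restr_simplex_minimizer_kkt: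
  assumes \<beta>: "\<beta> < 1" and x: "x \<in> restr_simplex I c"
    and x_min: "\<forall>y\<in>restr_simplex I c. ftrl_obj C \<beta> g I L x \<le> ftrl_obj C \<beta> g I L y"
  shows "kkt_point C \<beta> g I L x"
  unfolding kkt_point_def
proof (intro ballI)
  fix i j assume ij: "i \<in> I" "j \<in> I"
  show "L$i + gradphi C \<beta> g x i = L$j + gradphi C \<beta> g x j"
  proof (cases "i = j")
    case False
    have x_pos: "\<forall>k\<in>I. 0 < x$k" and x_out: "\<forall>k\<in>-I. x$k = 0"
      using x unfolding restr_simplex_def by auto
    define h where "h s = ftrl_coord_obj C \<beta> g L i (x$i + s) + ftrl_coord_obj C \<beta> g L j (x$j - s)"
      for s
    have d: "0 < min (x$i) (x$j)" using x_pos ij by simp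
    have h_min: "\<forall>s. \<bar>0 - s\<bar> < min (x$i) (x$j) \<longrightarrow> h 0 \<le> h s"
    proof (intro allI impI)
      fix s assume "\<bar>0 - s\<bar> < min (x$i) (x$j)"
      then have "shift_mass x i j s \<in> restr_simplex I c"
        using shift_mass_in_restr_simplex[OF x ij False] by simp
      then have "ftrl_obj C \<beta> g I L x \<le> ftrl_obj C \<beta> g I L (shift_mass x i j s)"
        using x_min by blast
      then show "h 0 \<le> h s"
        using ftrl_obj_shift_mass[OF x_out ij False, of C \<beta> g L s] unfolding h_def by simp
    qed
    have di: "(ftrl_coord_obj C \<beta> g L i has_real_derivative L$i + gradphi C \<beta> g x i) (at (x$i + 0))"
      using ftrl_coord_obj_has_derivative[of x i \<beta>] x_pos ij \<beta> by simp
    have dj: "(ftrl_coord_obj C \<beta> g L j has_real_derivative L$j + gradphi C \<beta> g x j) (at (x$j - 0))"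
      using ftrl_coord_obj_has_derivative[of x j \<beta>] x_pos ij \<beta> by simp
    have "(h has_real_derivative
            (L$i + gradphi C \<beta> g x i) * 1 + (L$j + gradphi C \<beta> g x j) * (0 - 1)) (at 0)"
      unfolding h_def[abs_def]
      by (intro derivative_intros DERIV_chain2[where g="\<lambda>s. x$i + s", OF di]
          DERIV_chain2[where g="\<lambda>s. x$j - s", OF dj]) (auto intro!: derivative_eq_intros)
    from DERIV_local_min[OF this d h_min] show ?thesis by simp
  qed simp
qed

lemma ftrl_kkt:
  assumes "0 < C" "0 < \<beta>" "\<beta> < 1" "\<forall>i. 0 \<le> g$i" "\<forall>i. 0 \<le> L$i"
    and "0 \<le> c" "c = 0 \<longleftrightarrow> I = {}"
  shows "ftrl C \<beta> g I c L \<in> restr_simplex I c" "kkt_point C \<beta> g I L (ftrl C \<beta> g I c L)"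
  using ftrl_minimizes[OF assms] restr_simplex_minimizer_kkt[OF assms(3)] by blast+

lemma ftrl_block_kkt:
  assumes "0 < C" "0 < \<beta>" "\<beta> < 1" "\<forall>i. 0 \<le> g$i" "\<forall>i. 0 \<le> L$i"
    and x_pos: "\<forall>i\<in>I. 0 < x$i"
  shows "ftrl C \<beta> g I (\<Sum>i\<in>I. x$i) L \<in> restr_simplex I (\<Sum>i\<in>I. x$i)"
    "kkt_point C \<beta> g I L (ftrl C \<beta> g I (\<Sum>i\<in>I. x$i) L)"
proof -
  have c_pos: "0 < (\<Sum>i\<in>I. x$i)" if "I \<noteq> {}"
    using sum_pos[of I "\<lambda>i. x$i"] that x_pos by simp
  have c_nonneg: "0 \<le> (\<Sum>i\<in>I. x$i)"
    using x_pos by (intro sum_nonneg) (simp add: le_less)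
  have c_zero: "(\<Sum>i\<in>I. x$i) = 0 \<longleftrightarrow> I = {}"
    using c_pos by fastforce
  show "ftrl C \<beta> g I (\<Sum>i\<in>I. x$i) L \<in> restr_simplex I (\<Sum>i\<in>I. x$i)"
    "kkt_point C \<beta> g I L (ftrl C \<beta> g I (\<Sum>i\<in>I. x$i) L)"
    using ftrl_kkt[OF assms(1-5) c_nonneg c_zero] by simp_all
qed

lemma ftrl_simplex_kkt:
  assumes "0 < C" "0 < \<beta>" "\<beta> < 1" "\<forall>i. 0 \<le> g$i" "\<forall>i. 0 \<le> L$i"
  shows "ftrl C \<beta> g UNIV 1 L \<in> restr_simplex UNIV 1" "kkt_point C \<beta> g UNIV L (ftrl C \<beta> g UNIV 1 L)"
  using ftrl_kkt[OF assms] by simp_all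

lemma kkt_pointD:
  assumes "kkt_point C \<beta> g I L x" "i \<in> I" "j \<in> I"
  shows "L$i + gradphi C \<beta> g x i = L$j + gradphi C \<beta> g x j"
  using assms unfolding kkt_point_def by blast

lemma kkt_point_subset:
  assumes "kkt_point C \<beta> g J L x" "I \<subseteq> J"
  shows "kkt_point C \<beta> g I L x"
  using assms unfolding kkt_point_def by blast

lemma sum_mult_eq_0_if_const:
  fixes a b :: "'i \<Rightarrow> 'a::semiring_0"
  assumes "\<And>i j. i \<in> I \<Longrightarrow> j \<in> I \<Longrightarrow> a i = a j" "(\<Sum>i\<in>I. b i) = 0"
  shows "(\<Sum>i\<in>I. a i * b i) = 0"
proof (cases "I = {}")
  case False
  then obtain k where k: "k \<in> I" by blast
  have "(\<Sum>i\<in>I. a i * b i) = (\<Sum>i\<in>I. a k * b i)"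
    by (rule sum.cong[OF refl]) (metis assms(1) k)
  also have "\<dots> = 0" using assms(2) by (simp add: sum_distrib_left[symmetric])
  finally show ?thesis .
qed simp

lemma ftrl_block_cross_term_eq_0:
  assumes "0 < C" "0 < \<beta>" "\<beta> < 1" "\<forall>i. 0 \<le> g$i" "\<forall>i. 0 \<le> L$i"
    and x_pos: "\<forall>i\<in>I. 0 < x$i"
    and z: "kkt_point C \<beta> g I L z"
    and y: "\<forall>i\<in>I. y$i = ftrl C \<beta> g I (\<Sum>i\<in>I. x$i) L $ i"
  shows "(\<Sum>i\<in>I. (gradphi C \<beta> g y i - gradphi C \<beta> g z i) * (x$i - y$i)) = 0"
proof (rule sum_mult_eq_0_if_const)
  define p where "p = ftrl C \<beta> g I (\<Sum>i\<in>I. x$i) L"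
  note p = ftrl_block_kkt[OF assms(1-5) x_pos, folded p_def]
  have y_p: "gradphi C \<beta> g y i = gradphi C \<beta> g p i" if "i \<in> I" for i
    using y that unfolding p_def gradphi_def by simp
  show "gradphi C \<beta> g y i - gradphi C \<beta> g z i = gradphi C \<beta> g y j - gradphi C \<beta> g z j"
    if ij: "i \<in> I" "j \<in> I" for i j
    using kkt_pointD[OF p(2) ij] kkt_pointD[OF z ij] y_p[OF ij(1)] y_p[OF ij(2)] by linarith
  show "(\<Sum>i\<in>I. x$i - y$i) = 0"
    using p(1) y unfolding restr_simplex_def p_def by (simp add: sum_subtractf)
qed

lemma ftrl_partition_cross_term_eq_0:
  assumes reg: "0 < C" "0 < \<beta>" "\<beta> < 1" "\<forall>i. 0 \<le> g$i" "\<forall>i. 0 \<le> L$i"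
    and x_pos: "\<forall>i. 0 < x$i" and z: "kkt_point C \<beta> g UNIV L z"
    and UV: "U \<union> V = UNIV" "U \<inter> V = {}"
  defines "y \<equiv> ftrl C \<beta> g U (\<Sum>i\<in>U. x$i) L + ftrl C \<beta> g V (\<Sum>i\<in>V. x$i) L"
  shows "(\<Sum>i\<in>UNIV. (gradphi C \<beta> g y i - gradphi C \<beta> g z i) * (x$i - y$i)) = 0"
proof -
  have x_pos_on: "\<forall>i\<in>I. 0 < x$i" for I using x_pos by simp
  have z_on: "kkt_point C \<beta> g I L z" for I using kkt_point_subset[OF z] by simp
  have vanishes: "ftrl C \<beta> g I (\<Sum>i\<in>I. x$i) L $ i = 0" if "i \<notin> I" for I i
    using ftrl_block_kkt(1)[OF reg x_pos_on] that unfolding restr_simplex_def by simp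
  note block = ftrl_block_cross_term_eq_0[OF reg x_pos_on z_on]
  have "(\<Sum>i\<in>U. (gradphi C \<beta> g y i - gradphi C \<beta> g z i) * (x$i - y$i)) = 0"
    using vanishes UV(2) unfolding y_def by (intro block) auto
  moreover have "(\<Sum>i\<in>V. (gradphi C \<beta> g y i - gradphi C \<beta> g z i) * (x$i - y$i)) = 0"
    using vanishes UV(2) unfolding y_def by (intro block) auto
  ultimately show ?thesis
    unfolding UV(1)[symmetric] sum.union_disjoint[OF finite finite UV(2)] by simp
qed

lemma DI_three_point:
  "DI C \<beta> gs gr UNIV x z = DI C \<beta> gs gr UNIV x y + DI C \<beta> gr gr UNIV y z
     + (\<Sum>i\<in>UNIV. (gradphi C \<beta> gr y i - gradphi C \<beta> gr z i) * (x$i - y$i))"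
  unfolding DI_def by (simp add: algebra_simps sum_subtractf sum.distrib)

lemma DI_Un:
  assumes "A \<inter> B = {}"
  shows "DI C \<beta> gs gr (A \<union> B) x y = DI C \<beta> gs gr A x y + DI C \<beta> gs gr B x y"
  unfolding DI_def phiI_def using assms by (simp add: sum.union_disjoint algebra_simps)

theorem lemma1:
  fixes C \<beta> :: real and gt gt1 :: "real^'k" and lhat :: "nat \<Rightarrow> real^'k"
    and t :: nat and U V :: "'k set"
  assumes "0 < \<beta>" "\<beta> < 1" "0 < C"
    and "\<forall>i. 0 < gt$i" "\<forall>i. 0 < gt1$i"
    and "1 \<le> t"
    and "\<forall>\<tau>\<in>{1..t}. \<forall>i. 0 \<le> lhat \<tau> $ i"
    and "U \<union> V = UNIV" "U \<inter> V = {}" "U \<noteq> {}"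
  defines "Lt \<equiv> (\<Sum>\<tau>\<in>{1..<t}. lhat \<tau>)"
    and "Lt1 \<equiv> (\<Sum>\<tau>\<in>{1..t}. lhat \<tau>)"
  defines "pt \<equiv> ftrl C \<beta> gt UNIV 1 Lt"
    and "pt1 \<equiv> ftrl C \<beta> gt1 UNIV 1 Lt1"
    and "qt \<equiv> ftrl C \<beta> gt U 1 Lt"
    and "qt1 \<equiv> ftrl C \<beta> gt1 U 1 Lt1"
  defines "pbar \<equiv> ftrl C \<beta> gt1 U (\<Sum>i\<in>U. pt$i) Lt1 + ftrl C \<beta> gt1 V (\<Sum>i\<in>V. pt$i) Lt1"
  shows "DI C \<beta> gt gt1 UNIV pt pt1 - DI C \<beta> gt gt1 U qt qt1
         \<le> DI C \<beta> gt gt1 V pt pbar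
           + (DI C \<beta> gt gt1 U pt pbar - DI C \<beta> gt gt1 U qt qt1)
           + DI C \<beta> gt1 gt1 UNIV pbar pt1"
proof -
  note reg = assms(3,1,2)
  have g: "\<forall>i. 0 \<le> gt$i" "\<forall>i. 0 \<le> gt1$i" using assms(4,5) less_imp_le by blast+
  have L: "\<forall>i. 0 \<le> Lt$i" "\<forall>i. 0 \<le> Lt1$i"
    using assms(7) unfolding Lt_def Lt1_def by (auto intro!: sum_nonneg)
  have pt_pos: "\<forall>i. 0 < pt$i"
    using ftrl_simplex_kkt(1)[OF reg g(1) L(1)] unfolding pt_def restr_simplex_def by simp
  have "(\<Sum>i\<in>UNIV. (gradphi C \<beta> gt1 pbar i - gradphi C \<beta> gt1 pt1 i) * (pt$i - pbar$i)) = 0"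
    unfolding pbar_def pt1_def
    by (rule ftrl_partition_cross_term_eq_0[OF reg g(2) L(2) pt_pos
          ftrl_simplex_kkt(2)[OF reg g(2) L(2)] assms(8,9)])
  then show ?thesis
    using DI_three_point[of C \<beta> gt gt1 pt pt1 pbar]
      DI_Un[OF assms(9), unfolded assms(8), of C \<beta> gt gt1 pt pbar] by linarith
qed

end
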